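(* Let $\textnormal{R}\in\{\textnormal{CH},\textnormal{wCH}\}$ and let $\omega\in\Omega$ be any path. Then $I_\textnormal{R}(\omega)$ is the smallest interval forecast that $\omega$ is $\textnormal{R}$-random for; that is, $\omega$ is $\textnormal{R}$-random for $I_\textnormal{R}(\omega)$, and $I_\textnormal{R}(\omega)\subseteq I$ for every interval forecast $I$ that $\omega$ is $\textnormal{R}$-random for.
   Context: $\mathcal{X}=\{0,1\}$; $\Omega=\mathcal{X}^{\mathbb{N}}$ (paths $\omega=(\omega_1,\omega_2,\dots)$); $\mathbb{S}=\bigcup_{n\ge0}\mathcal X^n$ (situations), $|s|$ length, $\omega_{1:n}=(\omega_1,\dots,\omega_n)$, $\omega_{1:0}$ the empty string. $\mathcal I$: the set of nonempty closed intervals $I\subseteq[0,1]$ (interval forecasts). A path $\omega$ is CH-random (resp. wCH-random) for $I\in\mathcal I$ if for every recursive (resp. recursive and temporal, i.e. $S(s)$ depends only on $|s|$) selection process $S:\mathbb S\to\{0,1\}$ with $\lim_n\sum_{k=0}^{n-1}S(\omega_{1:k})=\infty$, we have $\min I\le\liminf_n\frac{\sum_{k=0}^{n-1}S(\omega_{1:k})\omega_{k+1}}{\sum_{k=0}^{n-1}S(\omega_{1:k})}\le\limsup_n\frac{\sum_{k=0}^{n-1}S(\omega_{1:k})\omega_{k+1}}{\sum_{k=0}^{n-1}S(\omega_{1:k})}\le\max I$. $\mathcal I_\textnormal{R}(\omega)=\{I\in\mathcal I:\omega\text{ is R-random for }I\}$ and $I_\textnormal{R}(\omega)=\bigcap_{I\in\mathcal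 I_\textnormal{R}(\omega)}I$. *)

theory Defs
  imports "HOL-Analysis.Analysis" "HOL-Library.Extended_Real"
begin

datatype recf = Zero | Succ | Proj nat | Comp recf "recf list" | Prim recf recf | Mu recf

inductive eval :: "recf \<Rightarrow> nat list \<Rightarrow> nat \<Rightarrow> bool" where
  eval_Zero: "eval Zero xs 0"
| eval_Succ: "eval Succ (x # xs) (Suc x)"
| eval_Proj: "i < length xs \<Longrightarrow> eval (Proj i) xs (xs ! i)"
| eval_Comp: "list_all2 (\<lambda>g y. eval g xs y) gs ys \<Longrightarrow> eval f ys z \<Longrightarrow> eval (Comp f gs) xs z"
| eval_Prim0: "eval f xs y \<Longrightarrow> eval (Prim f g) (0 # xs) y"
| eval_PrimS: "eval (Prim f g) (n # xs) y \<Longrightarrow> eval g (y # n # xs) z \<Longrightarrow> eval (Prim f g) (Suc n # xs) z"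
| eval_Mu: "eval f (n # xs) 0 \<Longrightarrow> (\<forall>m<n. \<exists>y. y > 0 \<and> eval f (m # xs) y) \<Longrightarrow> eval (Mu f) xs n"

text \<open>Situations are finite bit strings (bool list, True = 1); a path is
  omega :: nat \<Rightarrow> bool where omega k is the paper's omega_(k+1).\<close>

fun code_sit :: "bool list \<Rightarrow> nat" where
  "code_sit [] = 1"
| "code_sit (b # s) = 2 * code_sit s + (if b then 1 else 0)"

text \<open>A situation is encoded by reading it in reverse as binary with a leading 1
  (injective, computable encoding).\<close>
definition code :: "bool list \<Rightarrow> nat" where
  "code s = code_sit (rev s)"

definition recursive_sel :: "(bool list \<Rightarrow> bool) \<Rightarrow> bool" where
  "recursive_sel S \<longleftrightarrow> (\<exists>r. \<forall>s. eval r [code s] (if S s then 1 else 0))"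

definition temporal_sel :: "(bool list \<Rightarrow> bool) \<Rightarrow> bool" where
  "temporal_sel S \<longleftrightarrow> (\<forall>s t. length s = length t \<longrightarrow> S s = S t)"

datatype randomness = CH | wCH

definition admissible :: "randomness \<Rightarrow> (bool list \<Rightarrow> bool) \<Rightarrow> bool" where
  "admissible R S \<longleftrightarrow> recursive_sel S \<and> (R = wCH \<longrightarrow> temporal_sel S)"

definition prefix :: "(nat \<Rightarrow> bool) \<Rightarrow> nat \<Rightarrow> bool list" where
  "prefix \<omega> n = map \<omega> [0..<n]"

definition sel_count :: "(bool list \<Rightarrow> bool) \<Rightarrow> (nat \<Rightarrow> bool) \<Rightarrow> nat \<Rightarrow> real" where
  "sel_count S \<omega> n = (\<Sum>k<n. if S (prefix \<omega> k) then 1 else 0)"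

definition sel_ones :: "(bool list \<Rightarrow> bool) \<Rightarrow> (nat \<Rightarrow> bool) \<Rightarrow> nat \<Rightarrow> real" where
  "sel_ones S \<omega> n = (\<Sum>k<n. if S (prefix \<omega> k) \<and> \<omega> k then 1 else 0)"

definition sel_freq :: "(bool list \<Rightarrow> bool) \<Rightarrow> (nat \<Rightarrow> bool) \<Rightarrow> nat \<Rightarrow> real" where
  "sel_freq S \<omega> n = sel_ones S \<omega> n / sel_count S \<omega> n"

definition interval_forecasts :: "real set set" where
  "interval_forecasts = {I. \<exists>a b. 0 \<le> a \<and> a \<le> b \<and> b \<le> 1 \<and> I = {a..b}}"

definition is_random :: "randomness \<Rightarrow> (nat \<Rightarrow> bool) \<Rightarrow> real set \<Rightarrow> bool" where
  "is_random R \<omega> I \<longleftrightarrow>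
     (\<forall>S. admissible R S \<and> filterlim (sel_count S \<omega>) at_top sequentially \<longrightarrow>
        ereal (Inf I) \<le> liminf (\<lambda>n. ereal (sel_freq S \<omega> n)) \<and>
        liminf (\<lambda>n. ereal (sel_freq S \<omega> n)) \<le> limsup (\<lambda>n. ereal (sel_freq S \<omega> n)) \<and>
        limsup (\<lambda>n. ereal (sel_freq S \<omega> n)) \<le> ereal (Sup I))"

definition random_forecasts :: "randomness \<Rightarrow> (nat \<Rightarrow> bool) \<Rightarrow> real set set" where
  "random_forecasts R \<omega> = {I \<in> interval_forecasts. is_random R \<omega> I}"

definition I_R :: "randomness \<Rightarrow> (nat \<Rightarrow> bool) \<Rightarrow> real set" where
  "I_R R \<omega> = \<Inter> (random_forecasts R \<omega>)"

end

theory Submission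
  imports Defs
begin

text \<open>Whether \<open>\<omega>\<close> is R-random for \<open>[a, b]\<close> only depends on the two extended reals
  \<open>inf\<^sub>S liminf freq\<^sub>S\<close> and \<open>sup\<^sub>S limsup freq\<^sub>S\<close>, taken over the admissible selections \<open>S\<close>
  that select infinitely often: \<open>\<omega>\<close> is random for \<open>[a, b]\<close> iff \<open>a\<close> is below the first and
  \<open>b\<close> above the second. Selecting everything shows that this family of selections is
  nonempty and frequencies lie in \<open>[0, 1]\<close>, so both numbers are reals with
  \<open>0 \<le> lower \<le> upper \<le> 1\<close>; hence \<open>[lower, upper]\<close> is the least interval forecast
  for which \<open>\<omega>\<close> is random, and it is the intersection of all of them.\<close>

lemma sel_freq_bounds: "0 \<le> sel_freq S \<omega> n \<and> sel_freq S \<omega> n \<le> 1"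
proof -
  have "sel_ones S \<omega> n \<le> sel_count S \<omega> n"
    unfolding sel_ones_def sel_count_def by (rule sum_mono) auto
  moreover have "0 \<le> sel_ones S \<omega> n"
    unfolding sel_ones_def by (rule sum_nonneg) auto
  ultimately show ?thesis
    unfolding sel_freq_def by (cases "sel_count S \<omega> n = 0") (auto simp: divide_le_eq_1)
qed

definition selections :: "randomness \<Rightarrow> (nat \<Rightarrow> bool) \<Rightarrow> (bool list \<Rightarrow> bool) set" where
  "selections R \<omega> = {S. admissible R S \<and> filterlim (sel_count S \<omega>) at_top sequentially}"

definition lower_freq :: "(bool list \<Rightarrow> bool) \<Rightarrow> (nat \<Rightarrow> bool) \<Rightarrow> ereal" where
  "lower_freq S \<omega> = liminf (\<lambda>n. ereal (sel_freq S \<omega> n))"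

definition upper_freq :: "(bool list \<Rightarrow> bool) \<Rightarrow> (nat \<Rightarrow> bool) \<Rightarrow> ereal" where
  "upper_freq S \<omega> = limsup (\<lambda>n. ereal (sel_freq S \<omega> n))"

lemma lower_freq_nonneg: "0 \<le> lower_freq S \<omega>"
  unfolding lower_freq_def by (rule Liminf_bounded) (use sel_freq_bounds in auto)

lemma upper_freq_le_1: "upper_freq S \<omega> \<le> 1"
  unfolding upper_freq_def by (rule Limsup_bounded) (use sel_freq_bounds in auto)

lemma lower_freq_le_upper_freq: "lower_freq S \<omega> \<le> upper_freq S \<omega>"
  unfolding lower_freq_def upper_freq_def by (rule Liminf_le_Limsup) simp

lemma admissible_select_all: "admissible R (\<lambda>_. True)"
proof -
  have "eval (Comp Succ [Zero]) [code s] 1" for s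
  proof (rule eval_Comp)
    show "list_all2 (\<lambda>g y. eval g [code s] y) [Zero] [0]"
      by (simp add: eval_Zero)
    show "eval Succ [0] 1"
      using eval_Succ[of 0 "[]"] by simp
  qed
  then show ?thesis
    unfolding admissible_def recursive_sel_def temporal_sel_def by auto
qed

lemma select_all_in_selections: "(\<lambda>_. True) \<in> selections R \<omega>"
proof -
  have "sel_count (\<lambda>_. True) \<omega> = real"
    by (rule ext) (simp add: sel_count_def)
  then show ?thesis
    unfolding selections_def using admissible_select_all filterlim_real_sequentially by simp
qed

lemma is_random_interval_iff:
  assumes "a \<le> b"
  shows "is_random R \<omega> {a..b} \<longleftrightarrow>
    (\<forall>S \<in> selections R \<omega>. ereal a \<le> lower_freq S \<omega> \<and> upper_freq S \<omega> \<le> ereal b)"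
  using assms lower_freq_le_upper_freq
  unfolding is_random_def selections_def lower_freq_def upper_freq_def by auto

definition lower_rate :: "randomness \<Rightarrow> (nat \<Rightarrow> bool) \<Rightarrow> real" where
  "lower_rate R \<omega> = real_of_ereal (INF S \<in> selections R \<omega>. lower_freq S \<omega>)"

definition upper_rate :: "randomness \<Rightarrow> (nat \<Rightarrow> bool) \<Rightarrow> real" where
  "upper_rate R \<omega> = real_of_ereal (SUP S \<in> selections R \<omega>. upper_freq S \<omega>)"

lemma INF_lower_freq_bounds:
  "0 \<le> (INF S \<in> selections R \<omega>. lower_freq S \<omega>)"
  "(INF S \<in> selections R \<omega>. lower_freq S \<omega>) \<le> 1"
proof -
  show "0 \<le> (INF S \<in> selections R \<omega>. lower_freq S \<omega>)"
    by (rule INF_greatest) (rule lower_freq_nonneg)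
  have "(INF S \<in> selections R \<omega>. lower_freq S \<omega>) \<le> lower_freq (\<lambda>_. True) \<omega>"
    by (rule INF_lower) (rule select_all_in_selections)
  also have "\<dots> \<le> 1"
    using lower_freq_le_upper_freq upper_freq_le_1 by (rule order_trans)
  finally show "(INF S \<in> selections R \<omega>. lower_freq S \<omega>) \<le> 1" .
qed

lemma SUP_upper_freq_bounds:
  "0 \<le> (SUP S \<in> selections R \<omega>. upper_freq S \<omega>)"
  "(SUP S \<in> selections R \<omega>. upper_freq S \<omega>) \<le> 1"
proof -
  have "0 \<le> upper_freq (\<lambda>_. True) \<omega>"
    using lower_freq_nonneg lower_freq_le_upper_freq by (rule order_trans)
  also have "\<dots> \<le> (SUP S \<in> selections R \<omega>. upper_freq S \<omega>)"
    by (rule SUP_upper) (rule select_all_in_selections)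
  finally show "0 \<le> (SUP S \<in> selections R \<omega>. upper_freq S \<omega>)" .
  show "(SUP S \<in> selections R \<omega>. upper_freq S \<omega>) \<le> 1"
    by (rule SUP_least) (rule upper_freq_le_1)
qed

lemma ereal_lower_rate: "ereal (lower_rate R \<omega>) = (INF S \<in> selections R \<omega>. lower_freq S \<omega>)"
  unfolding lower_rate_def using INF_lower_freq_bounds[where R = R and \<omega> = \<omega>] by (intro ereal_real') auto

lemma ereal_upper_rate: "ereal (upper_rate R \<omega>) = (SUP S \<in> selections R \<omega>. upper_freq S \<omega>)"
  unfolding upper_rate_def using SUP_upper_freq_bounds[where R = R and \<omega> = \<omega>] by (intro ereal_real') auto

lemma rates_interval_forecast: "{lower_rate R \<omega>..upper_rate R \<omega>} \<in> interval_forecasts"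
proof -
  have "ereal (lower_rate R \<omega>) \<le> lower_freq (\<lambda>_. True) \<omega>"
    unfolding ereal_lower_rate by (rule INF_lower) (rule select_all_in_selections)
  also have "\<dots> \<le> upper_freq (\<lambda>_. True) \<omega>"
    by (rule lower_freq_le_upper_freq)
  also have "\<dots> \<le> ereal (upper_rate R \<omega>)"
    unfolding ereal_upper_rate by (rule SUP_upper) (rule select_all_in_selections)
  finally have "lower_rate R \<omega> \<le> upper_rate R \<omega>"
    by simp
  moreover have "0 \<le> lower_rate R \<omega>" "upper_rate R \<omega> \<le> 1"
    using INF_lower_freq_bounds(1)[where R = R and \<omega> = \<omega>]
      SUP_upper_freq_bounds(2)[where R = R and \<omega> = \<omega>]
    unfolding ereal_lower_rate[symmetric] ereal_upper_rate[symmetric] by auto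
  ultimately show ?thesis
    unfolding interval_forecasts_def by blast
qed

lemma is_random_rates: "is_random R \<omega> {lower_rate R \<omega>..upper_rate R \<omega>}"
proof -
  have "lower_rate R \<omega> \<le> upper_rate R \<omega>"
    using rates_interval_forecast unfolding interval_forecasts_def by fastforce
  moreover have "ereal (lower_rate R \<omega>) \<le> lower_freq S \<omega> \<and> upper_freq S \<omega> \<le> ereal (upper_rate R \<omega>)"
    if "S \<in> selections R \<omega>" for S
    unfolding ereal_lower_rate ereal_upper_rate using that by (auto intro: INF_lower SUP_upper)
  ultimately show ?thesis
    by (simp add: is_random_interval_iff)
qed

lemma rates_subset_if_is_random:
  assumes "I \<in> interval_forecasts" and "is_random R \<omega> I"
  shows "{lower_rate R \<omega>..upper_rate R \<omega>} \<subseteq> I"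
proof -
  obtain a b where ab: "a \<le> b" "I = {a..b}"
    using assms(1) unfolding interval_forecasts_def by blast
  then have bounds: "ereal a \<le> lower_freq S \<omega> \<and> upper_freq S \<omega> \<le> ereal b"
    if "S \<in> selections R \<omega>" for S
    using assms(2) that by (simp add: is_random_interval_iff)
  have "ereal a \<le> ereal (lower_rate R \<omega>)"
    unfolding ereal_lower_rate using bounds by (blast intro: INF_greatest)
  moreover have "ereal (upper_rate R \<omega>) \<le> ereal b"
    unfolding ereal_upper_rate using bounds by (blast intro: SUP_least)
  ultimately show ?thesis
    using ab by auto
qed

lemma I_R_eq_rates: "I_R R \<omega> = {lower_rate R \<omega>..upper_rate R \<omega>}"
proof
  show "I_R R \<omega> \<subseteq> {lower_rate R \<omega>..upper_rate R \<omega>}"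
    unfolding I_R_def random_forecasts_def
    using rates_interval_forecast is_random_rates by blast
  show "{lower_rate R \<omega>..upper_rate R \<omega>} \<subseteq> I_R R \<omega>"
    unfolding I_R_def random_forecasts_def using rates_subset_if_is_random by blast
qed

theorem proposition2:
  fixes R :: randomness and \<omega> :: "nat \<Rightarrow> bool"
  shows "I_R R \<omega> \<in> interval_forecasts \<and> is_random R \<omega> (I_R R \<omega>) \<and>
         (\<forall>I \<in> interval_forecasts. is_random R \<omega> I \<longrightarrow> I_R R \<omega> \<subseteq> I)"
  unfolding I_R_eq_rates
  using rates_interval_forecast is_random_rates rates_subset_if_is_random by blast

end
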